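(* Let $k\ge 1$ and let $G$ be a $k$-symmetric graph on $n>k$ vertices. Then $2^{\binom{k}{2}}$ divides $\binom{n}{k}$.
   Context: All graphs are finite and simple. For a graph $G$ on $n$ vertices and a graph $H$ on $k$ vertices, the density $t(H,G)$ is the number of $k$-element subsets $S\subseteq V(G)$ whose induced subgraph $G[S]$ is isomorphic to $H$, divided by $\binom{n}{k}$ (and $t(H,G)=0$ if $n<k$). A graph $G$ with $n\ge k$ vertices is called $k$-symmetric if for every graph $H$ on $k$ vertices, $t(H,G)$ equals the probability that the uniformly random labelled graph on vertex set $\{1,\dots,k\}$ (each of the $\binom{k}{2}$ possible edges present independently with probability $1/2$) is isomorphic to $H$; graphs with fewer than $k$ vertices are considered trivially $k$-symmetric. *)

theory Defs
  imports Complex_Main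
begin

definition simple_graph :: "'a set \<Rightarrow> 'a set set \<Rightarrow> bool" where
  "simple_graph V E \<longleftrightarrow> finite V \<and> (\<forall>e\<in>E. e \<subseteq> V \<and> card e = 2)"

definition all_edges :: "'a set \<Rightarrow> 'a set set" where
  "all_edges V = {e. e \<subseteq> V \<and> card e = 2}"

definition induced_edges :: "'a set set \<Rightarrow> 'a set \<Rightarrow> 'a set set" where
  "induced_edges E S = {e \<in> E. e \<subseteq> S}"

definition graph_iso :: "'a set \<Rightarrow> 'a set set \<Rightarrow> 'b set \<Rightarrow> 'b set set \<Rightarrow> bool" where
  "graph_iso V1 E1 V2 E2 \<longleftrightarrow> (\<exists>f. bij_betw f V1 V2 \<and>
      (\<forall>u\<in>V1. \<forall>v\<in>V1. {u, v} \<in> E1 \<longleftrightarrow> {f u, f v} \<in> E2))"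

definition density :: "'b set \<Rightarrow> 'b set set \<Rightarrow> 'a set \<Rightarrow> 'a set set \<Rightarrow> real" where
  "density HV HE V E =
     (if card V < card HV then 0
      else real (card {S. S \<subseteq> V \<and> card S = card HV \<and> graph_iso S (induced_edges E S) HV HE})
           / real (card V choose card HV))"

definition random_iso_prob :: "nat \<Rightarrow> 'b set \<Rightarrow> 'b set set \<Rightarrow> real" where
  "random_iso_prob k HV HE =
     real (card {E'. E' \<subseteq> all_edges {1..k} \<and> graph_iso {1..k} E' HV HE}) / 2 ^ (k choose 2)"

text \<open>k-symmetric graphs. Every graph on k vertices is isomorphic to one on vertex set {1..k},
  and both sides are isomorphism invariant, so we quantify over graphs on {1..k}.\<close>
definition k_symmetric :: "nat \<Rightarrow> 'a set \<Rightarrow> 'a set set \<Rightarrow> bool" where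
  "k_symmetric k V E \<longleftrightarrow> card V < k \<or>
     (\<forall>HE. simple_graph {1..k::nat} HE \<longrightarrow>
        density {1..k} HE V E = random_iso_prob k {1..k} HE)"

end

theory Submission
  imports Defs
begin

text \<open>Apply k-symmetry to the edgeless graph on k vertices. The uniform random graph is edgeless
  with probability \<open>2^-(k choose 2)\<close>, so the number N of independent k-sets of G satisfies
  \<open>N / (n choose k) = 2^-(k choose 2)\<close>, i.e. \<open>N * 2^(k choose 2) = n choose k\<close>.\<close>

lemma graph_iso_edgeless_imp_edgeless:
  assumes "graph_iso V E W {}" and "E \<subseteq> all_edges V"
  shows "E = {}"
proof (rule ccontr)
  assume "E \<noteq> {}"
  then obtain e where e: "e \<in> E" by auto
  with assms(2) have "e \<subseteq> V" "card e = 2" by (auto simp: all_edges_def)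
  then obtain u v where "e = {u, v}" "u \<in> V" "v \<in> V"
    by (metis card_2_iff insert_subset)
  with e assms(1) show False by (auto simp: graph_iso_def)
qed

lemma graph_iso_edgeless_refl: "graph_iso V {} V {}"
  unfolding graph_iso_def by (rule exI[of _ id]) auto

lemma random_iso_prob_edgeless:
  "random_iso_prob k {1..k} ({}::nat set set) = 1 / 2 ^ (k choose 2)"
proof -
  have "{E'. E' \<subseteq> all_edges {1..k} \<and> graph_iso {1..k} E' {1..k} ({}::nat set set)} = {{}}"
    using graph_iso_edgeless_imp_edgeless graph_iso_edgeless_refl by blast
  then show ?thesis
    unfolding random_iso_prob_def by simp
qed

theorem mainTheorem4:
  fixes V :: "'a set" and E :: "'a set set" and k :: nat
  assumes "k \<ge> 1" and "simple_graph V E" and "card V > k" and "k_symmetric k V E"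
  shows "(2::nat) ^ (k choose 2) dvd (card V choose k)"
proof -
  define N where
    "N = card {S. S \<subseteq> V \<and> card S = k \<and> graph_iso S (induced_edges E S) {1..k} ({}::nat set set)}"
  have "simple_graph {1..k::nat} {}"
    by (simp add: simple_graph_def)
  with assms(3,4) have "density {1..k} {} V E = 1 / 2 ^ (k choose 2)"
    unfolding k_symmetric_def random_iso_prob_edgeless[symmetric] by auto
  moreover have "density {1..k} {} V E = real N / real (card V choose k)"
    using assms(3) by (simp add: density_def N_def)
  moreover have "card V choose k > 0"
    using assms(3) by simp
  ultimately have "real (N * 2 ^ (k choose 2)) = real (card V choose k)"
    by (simp add: field_simps)
  then have "N * 2 ^ (k choose 2) = card V choose k"
    by (rule of_nat_eq_iff[THEN iffD1])
  then show ?thesis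
    by (metis dvd_triv_right)
qed

end
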